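(* Let $G$ be a simple graph and let $C=v-u-u_1-u_2-\dots-u_\ell-u'-v$ be a cycle of length at least $6$ in $G$ such that $u-u_1-\dots-u_\ell-u'$ is an induced path of $G$. Then $G$ has an induced cycle of length at least $4$, or $G$ has an induced claw $J$ and a triangle $T$ with $V(J)\cap V(T)\neq\emptyset$.
   Context: A claw is the graph $K_{1,3}$. *)

theory Defs
  imports Main
begin

definition simple_graph :: "'a set \<Rightarrow> ('a \<Rightarrow> 'a \<Rightarrow> bool) \<Rightarrow> bool" where
  "simple_graph V E \<longleftrightarrow> finite V \<and>
     (\<forall>x y. E x y \<longrightarrow> x \<in> V \<and> y \<in> V) \<and>
     (\<forall>x y. E x y \<longrightarrow> E y x) \<and> (\<forall>x. \<not> E x x)"

definition is_cycle :: "'a set \<Rightarrow> ('a \<Rightarrow> 'a \<Rightarrow> bool) \<Rightarrow> 'a list \<Rightarrow> bool" where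
  "is_cycle V E cs \<longleftrightarrow> length cs \<ge> 3 \<and> distinct cs \<and> set cs \<subseteq> V \<and>
     (\<forall>i < length cs. E (cs ! i) (cs ! ((i + 1) mod length cs)))"

definition induced_cycle :: "'a set \<Rightarrow> ('a \<Rightarrow> 'a \<Rightarrow> bool) \<Rightarrow> 'a list \<Rightarrow> bool" where
  "induced_cycle V E cs \<longleftrightarrow> is_cycle V E cs \<and>
     (\<forall>i < length cs. \<forall>j < length cs. E (cs ! i) (cs ! j) \<longrightarrow>
        j = (i + 1) mod length cs \<or> i = (j + 1) mod length cs)"

definition induced_path :: "'a set \<Rightarrow> ('a \<Rightarrow> 'a \<Rightarrow> bool) \<Rightarrow> 'a list \<Rightarrow> bool" where
  "induced_path V E ps \<longleftrightarrow> distinct ps \<and> set ps \<subseteq> V \<and>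
     (\<forall>i < length ps. \<forall>j < length ps. E (ps ! i) (ps ! j) \<longleftrightarrow> (j = i + 1 \<or> i = j + 1))"

definition induced_claw :: "'a set \<Rightarrow> ('a \<Rightarrow> 'a \<Rightarrow> bool) \<Rightarrow> 'a \<Rightarrow> 'a \<Rightarrow> 'a \<Rightarrow> 'a \<Rightarrow> bool" where
  "induced_claw V E c a b d \<longleftrightarrow> {c, a, b, d} \<subseteq> V \<and> distinct [c, a, b, d] \<and>
     E c a \<and> E c b \<and> E c d \<and> \<not> E a b \<and> \<not> E a d \<and> \<not> E b d"

definition triangle :: "'a set \<Rightarrow> ('a \<Rightarrow> 'a \<Rightarrow> bool) \<Rightarrow> 'a \<Rightarrow> 'a \<Rightarrow> 'a \<Rightarrow> bool" where
  "triangle V E x y z \<longleftrightarrow> {x, y, z} \<subseteq> V \<and> distinct [x, y, z] \<and> E x y \<and> E y z \<and> E x z"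

end

theory Submission
  imports Defs
begin

(* Let P = u u_1 ... u_l u' be the induced path, which has at least five vertices.
   If v is adjacent to every vertex of P, then v with the first, third and fifth
   vertex of P is an induced claw, and v with the first two vertices of P is a
   triangle through its centre.  Otherwise some vertex of P is not adjacent to v;
   the nearest neighbours of v on P on either side of it bound a subpath whose inner
   vertices are not adjacent to v, so this subpath closed up through v is an
   induced cycle with at least four vertices. *)

lemma simple_graph_sym: "simple_graph V E \<Longrightarrow> E x y \<Longrightarrow> E y x"
  unfolding simple_graph_def by blast

lemma simple_graph_irrefl: "simple_graph V E \<Longrightarrow> \<not> E x x"
  unfolding simple_graph_def by blast

lemma induced_path_adj_iff:
  "induced_path V E ps \<Longrightarrow> i < length ps \<Longrightarrow> j < length ps \<Longrightarrow>
     E (ps ! i) (ps ! j) \<longleftrightarrow> j = i + 1 \<or> i = j + 1"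
  unfolding induced_path_def by blast

lemma induced_path_take: "induced_path V E ps \<Longrightarrow> induced_path V E (take n ps)"
  unfolding induced_path_def by (auto dest: in_set_takeD)

lemma induced_path_drop: "induced_path V E ps \<Longrightarrow> induced_path V E (drop n ps)"
  unfolding induced_path_def by (auto dest: in_set_dropD)

lemma is_cycle_ConsD:
  assumes sg: "simple_graph V E" and cyc: "is_cycle V E (v # ps)"
  shows "v \<in> V" "v \<notin> set ps" "E v (ps ! 0)" "E v (ps ! (length ps - 1))"
proof -
  let ?n = "length (v # ps)"
  have edge: "E ((v # ps) ! i) ((v # ps) ! ((i + 1) mod ?n))" if "i < ?n" for i
    using cyc that unfolding is_cycle_def by blast
  have "ps \<noteq> []" using cyc unfolding is_cycle_def by auto
  show "v \<in> V" "v \<notin> set ps" using cyc unfolding is_cycle_def by auto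
  show "E v (ps ! 0)" using edge[of 0] \<open>ps \<noteq> []\<close> by simp
  have "E ((v # ps) ! length ps) v" using edge[of "length ps"] by simp
  then show "E v (ps ! (length ps - 1))"
    using \<open>ps \<noteq> []\<close> simple_graph_sym[OF sg] by (cases ps rule: rev_cases) auto
qed

lemma induced_cycle_close_path:
  assumes sg: "simple_graph V E" and ip: "induced_path V E ps" and len: "length ps \<ge> 2"
    and v: "v \<in> V" "v \<notin> set ps"
    and hd: "E v (ps ! 0)" and last: "E v (ps ! (length ps - 1))"
    and inner: "\<And>k. 0 < k \<Longrightarrow> k < length ps - 1 \<Longrightarrow> \<not> E v (ps ! k)"
  shows "induced_cycle V E (v # ps)"
proof -
  let ?n = "length (v # ps)"
  have adj_v: "E v (ps ! k) \<longleftrightarrow> k = 0 \<or> k = length ps - 1" if "k < length ps" for k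
    using that hd last inner by (cases "0 < k \<and> k < length ps - 1") auto
  have succ: "(i + 1) mod ?n = (if i = length ps then 0 else i + 1)" if "i < ?n" for i
    using that by auto
  have adj: "E ((v # ps) ! i) ((v # ps) ! j) \<longleftrightarrow>
      j = (i + 1) mod ?n \<or> i = (j + 1) mod ?n" if "i < ?n" "j < ?n" for i j
  proof (cases i)
    case 0
    show ?thesis
    proof (cases j)
      case 0
      then show ?thesis using \<open>i = 0\<close> simple_graph_irrefl[OF sg] len by auto
    next
      case (Suc j')
      then show ?thesis using \<open>i = 0\<close> that adj_v[of j'] succ[of j] by auto
    qed
  next
    case (Suc i')
    then show ?thesis
    proof (cases j)
      case 0
      then show ?thesis
        using \<open>i = Suc i'\<close> that adj_v[of i'] simple_graph_sym[OF sg] succ[of i] by auto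
    next
      case (Suc j')
      have "i' < length ps" "j' < length ps"
        using that \<open>i = Suc i'\<close> \<open>j = Suc j'\<close> by simp_all
      then show ?thesis
        using \<open>i = Suc i'\<close> \<open>j = Suc j'\<close> induced_path_adj_iff[OF ip] succ[OF that(1)] succ[OF that(2)]
        by (auto split: if_splits)
    qed
  qed
  have "is_cycle V E (v # ps)"
    unfolding is_cycle_def
  proof (intro conjI allI impI)
    show "distinct (v # ps)" "set (v # ps) \<subseteq> V"
      using ip v unfolding induced_path_def by auto
    show "E ((v # ps) ! i) ((v # ps) ! ((i + 1) mod ?n))" if "i < ?n" for i
      using adj[of i "(i + 1) mod ?n"] that by simp
  qed (use len in simp)
  then show ?thesis
    unfolding induced_cycle_def using adj by blast
qed

lemma claw_and_triangle_at_universal_vertex: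
  assumes ip: "induced_path V E ps" and len: "length ps \<ge> 5"
    and v: "v \<in> V" "v \<notin> set ps" and universal: "\<forall>x \<in> set ps. E v x"
  shows "induced_claw V E v (ps ! 0) (ps ! 2) (ps ! 4) \<and> triangle V E v (ps ! 0) (ps ! 1)"
proof -
  have path: "distinct ps" "set ps \<subseteq> V" using ip unfolding induced_path_def by auto
  have idx: "0 < length ps" "1 < length ps" "2 < length ps" "4 < length ps"
    using len by linarith+
  then have in_ps: "ps ! 0 \<in> set ps" "ps ! 1 \<in> set ps" "ps ! 2 \<in> set ps" "ps ! 4 \<in> set ps"
    by (meson nth_mem)+
  then have "E v (ps ! 0)" "E v (ps ! 1)" "E v (ps ! 2)" "E v (ps ! 4)"
    and "v \<noteq> ps ! 0" "v \<noteq> ps ! 1" "v \<noteq> ps ! 2" "v \<noteq> ps ! 4"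
    and "ps ! 0 \<in> V" "ps ! 1 \<in> V" "ps ! 2 \<in> V" "ps ! 4 \<in> V"
    using universal v(2) path(2) by auto
  moreover have "ps ! 0 \<noteq> ps ! 2" "ps ! 0 \<noteq> ps ! 4" "ps ! 2 \<noteq> ps ! 4" "ps ! 0 \<noteq> ps ! 1"
    using idx path(1) by (simp_all add: nth_eq_iff_index_eq)
  moreover have "\<not> E (ps ! 0) (ps ! 2)" "\<not> E (ps ! 0) (ps ! 4)" "\<not> E (ps ! 2) (ps ! 4)"
    "E (ps ! 0) (ps ! 1)"
    using idx by (simp_all add: induced_path_adj_iff[OF ip])
  ultimately show ?thesis
    unfolding induced_claw_def triangle_def using v(1) by simp
qed

lemma nearest_satisfying_around:
  fixes P :: "nat \<Rightarrow> bool"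
  assumes "P l" "P r" "l \<le> i" "i \<le> r" "\<not> P i"
  shows "\<exists>a b. l \<le> a \<and> a < i \<and> i < b \<and> b \<le> r \<and> P a \<and> P b \<and> (\<forall>k. a < k \<and> k < b \<longrightarrow> \<not> P k)"
proof -
  define A where "A = {k. l \<le> k \<and> k < i \<and> P k}"
  define B where "B = {k. i < k \<and> k \<le> r \<and> P k}"
  define a where "a = Max A"
  define b where "b = Min B"
  have "l < i" "i < r"
    using assms le_neq_implies_less by metis+
  then have "l \<in> A" "r \<in> B" "finite A" "finite B"
    using assms by (auto simp: A_def B_def)
  then have "a \<in> A" "b \<in> B" and a_max: "\<And>k. k \<in> A \<Longrightarrow> k \<le> a" and b_min: "\<And>k. k \<in> B \<Longrightarrow> b \<le> k"
    unfolding a_def b_def by (auto intro: Max_in Min_in)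
  have "\<not> P k" if "a < k" "k < b" for k
  proof
    assume "P k"
    have "k \<notin> A" "k \<notin> B"
      using that a_max b_min by fastforce+
    then show False
      using \<open>P k\<close> that \<open>a \<in> A\<close> \<open>b \<in> B\<close> assms(5) unfolding A_def B_def
      by (cases i k rule: linorder_cases) auto
  qed
  with \<open>a \<in> A\<close> \<open>b \<in> B\<close> show ?thesis
    unfolding A_def B_def by blast
qed

lemma induced_cycle_through_non_neighbour:
  assumes sg: "simple_graph V E" and ip: "induced_path V E ps"
    and v: "v \<in> V" "v \<notin> set ps"
    and hd: "E v (ps ! 0)" and last: "E v (ps ! (length ps - 1))"
    and i: "i < length ps" "\<not> E v (ps ! i)"
  shows "\<exists>cs. induced_cycle V E cs \<and> length cs \<ge> 4"
proof -
  have "i \<le> length ps - 1" using i(1) by simp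
  then obtain a b where "a < i" "i < b" "b \<le> length ps - 1" "E v (ps ! a)" "E v (ps ! b)"
    and gap: "\<And>k. a < k \<Longrightarrow> k < b \<Longrightarrow> \<not> E v (ps ! k)"
    using nearest_satisfying_around[of "\<lambda>k. E v (ps ! k)" 0 "length ps - 1" i, OF hd last le0 _ i(2)]
    by blast
  then have "b < length ps" using i(1) by linarith
  define seg where "seg = drop a (take (Suc b) ps)"
  have seg_len: "length seg = Suc b - a" and seg_nth: "\<And>k. k < length seg \<Longrightarrow> seg ! k = ps ! (a + k)"
    using \<open>b < length ps\<close> by (auto simp: seg_def)
  have "induced_cycle V E (v # seg)"
  proof (rule induced_cycle_close_path[OF sg _ _ v(1)])
    show "induced_path V E seg"
      unfolding seg_def by (intro induced_path_drop induced_path_take ip)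
    show "v \<notin> set seg"
      using v(2) unfolding seg_def by (meson in_set_dropD in_set_takeD)
    show "E v (seg ! 0)" "E v (seg ! (length seg - 1))"
      using \<open>E v (ps ! a)\<close> \<open>E v (ps ! b)\<close> \<open>a < i\<close> \<open>i < b\<close> seg_len seg_nth by auto
    show "\<not> E v (seg ! k)" if "0 < k" "k < length seg - 1" for k
      using that gap[of "a + k"] seg_len seg_nth by auto
  qed (use seg_len \<open>a < i\<close> \<open>i < b\<close> in simp)
  moreover have "length (v # seg) \<ge> 4"
    using seg_len \<open>a < i\<close> \<open>i < b\<close> by simp
  ultimately show ?thesis by blast
qed

theorem mainTheorem14:
  fixes V :: "'a set" and E :: "'a \<Rightarrow> 'a \<Rightarrow> bool"
    and v u u' :: 'a and us :: "'a list"
  assumes "simple_graph V E"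
    and "is_cycle V E (v # u # us @ [u'])"
    and "length (v # u # us @ [u']) \<ge> 6"
    and "induced_path V E (u # us @ [u'])"
  shows "(\<exists>cs. induced_cycle V E cs \<and> length cs \<ge> 4) \<or>
         (\<exists>c a b d x y z. induced_claw V E c a b d \<and> triangle V E x y z \<and>
            {c, a, b, d} \<inter> {x, y, z} \<noteq> {})"
proof -
  define ps where "ps = u # us @ [u']"
  have sg: "simple_graph V E" and ip: "induced_path V E ps" and len: "length ps \<ge> 5"
    using assms by (simp_all add: ps_def)
  have cyc: "is_cycle V E (v # ps)"
    using assms(2) by (simp add: ps_def)
  note v_facts = is_cycle_ConsD[OF sg cyc]
  show ?thesis
  proof (cases "\<forall>x \<in> set ps. E v x")
    case True
    then show ?thesis
      using claw_and_triangle_at_universal_vertex[OF ip len v_facts(1,2)] by blast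
  next
    case False
    then obtain i where "i < length ps" "\<not> E v (ps ! i)"
      by (auto simp: in_set_conv_nth)
    then show ?thesis
      using induced_cycle_through_non_neighbour[OF sg ip v_facts] by blast
  qed
qed

end
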